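(* Let $\mathfrak{B}\in\mathfrak{L}_{m,p}$ and let $Q_\Phi$ be a QDF. If $\mathfrak{B}$ is dissipative with respect to $Q_\Phi$, then there exists a storage function for $(\mathfrak{B},Q_\Phi)$ of degree less than $\max\{\deg(Q_\Phi),\ell(\mathfrak{B})\}$.
   Context: Time axis $\mathbb{Z}_+$, $m,p\ge1$, $q=m+p$. $\mathfrak{L}_{m,p}$ is the set of behaviors $\mathfrak{B}=\{w=(u,y):\mathbb{Z}_+\to\mathbb{R}^{q}\mid \exists x:\mathbb{Z}_+\to\mathbb{R}^n,\ x(t+1)=Ax(t)+Bu(t),\ y(t)=Cx(t)+Du(t)\ \forall t\}$ for some real matrices $A,B,C,D$ of compatible sizes ($n\ge0$). The lag $\ell(\mathfrak{B})$ is the smallest $k\ge0$ with $\operatorname{rank}\mathcal{O}_k=\operatorname{rank}\mathcal{O}_{k+1}$, where $\mathcal{O}_k=\operatorname{col}(C,CA,\dots,CA^{k-1})$, for any such representation. A QDF with coefficient matrix $\Psi\in\mathbb{S}^{(M+1)q}$ ($M\ge-1$, $M=-1$ giving the zero QDF) is $Q_\Psi(w)(t)=w_{[t,t+M]}^\top\Psi w_{[t,t+M]}$, with $w_{[t,t+M]}=\operatorname{col}(w(t),\dots,w(t+M))$; its degree is the smallest $d\ge-1$ such that all $q\times q$ blocks $\Psi_{i,j}$ with $i>d$ vanish. $\nabla\Psi:=\begin{bmatrix}0_{q,q}&0\\0&\Psi\end{bmatrix}-\begin{bmatrix}\Psi&0\\0&0_{q,q}\end{bmatrix}$, so $Q_{\nabla\Psi}(w)(t)=Q_\Psi(w)(t+1)-Q_\Psi(w)(t)$.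 Inequalities "on $\mathfrak{B}$" hold for all $w\in\mathfrak{B}$ and all $t$. $\mathfrak{B}$ is dissipative with respect to $Q_\Phi$ if there is a QDF $Q_\Psi$ (a storage function for $(\mathfrak{B},Q_\Phi)$) with $Q_\Psi\ge0$ on $\mathfrak{B}$ and $Q_{\nabla\Psi}\le Q_\Phi$ on $\mathfrak{B}$. *)

theory Defs
  imports "Jordan_Normal_Form.DL_Rank"
begin

(* Signals w : nat => real vec with values in R^q, q = m + p; w = (u,y) with
   u(t) the first m components and y(t) the last p components. *)

definition inp :: "nat \<Rightarrow> real vec \<Rightarrow> real vec" where
  "inp m v = vec m (\<lambda>i. v $ i)"

definition outp :: "nat \<Rightarrow> nat \<Rightarrow> real vec \<Rightarrow> real vec" where
  "outp m p v = vec p (\<lambda>i. v $ (m + i))"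

definition behavior :: "nat \<Rightarrow> nat \<Rightarrow> nat \<Rightarrow> real mat \<Rightarrow> real mat \<Rightarrow> real mat \<Rightarrow> real mat
    \<Rightarrow> (nat \<Rightarrow> real vec) set" where
  "behavior m p n A B C D =
     {w. (\<forall>t. w t \<in> carrier_vec (m + p)) \<and>
         (\<exists>x :: nat \<Rightarrow> real vec. (\<forall>t. x t \<in> carrier_vec n) \<and>
            (\<forall>t. x (Suc t) = A *\<^sub>v x t + B *\<^sub>v inp m (w t) \<and>
                 outp m p (w t) = C *\<^sub>v x t + D *\<^sub>v inp m (w t)))}"

definition is_repr :: "nat \<Rightarrow> nat \<Rightarrow> (nat \<Rightarrow> real vec) set
    \<Rightarrow> nat \<times> real mat \<times> real mat \<times> real mat \<times> real mat \<Rightarrow> bool" where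
  "is_repr m p Bh r = (case r of (n, A, B, C, D) \<Rightarrow>
     A \<in> carrier_mat n n \<and> B \<in> carrier_mat n m \<and> C \<in> carrier_mat p n \<and>
     D \<in> carrier_mat p m \<and> Bh = behavior m p n A B C D)"

definition L_class :: "nat \<Rightarrow> nat \<Rightarrow> (nat \<Rightarrow> real vec) set set" where
  "L_class m p = {Bh. \<exists>r. is_repr m p Bh r}"

(* Observability matrix O_k = col(C, CA, ..., CA^(k-1)), a (k*p) x n matrix *)
definition obs_mat :: "nat \<Rightarrow> nat \<Rightarrow> nat \<Rightarrow> real mat \<Rightarrow> real mat \<Rightarrow> real mat" where
  "obs_mat p n k C A = mat (k * p) n (\<lambda>(i, j). (C * A ^\<^sub>m (i div p)) $$ (i mod p, j))"

definition obs_rank :: "nat \<Rightarrow> nat \<Rightarrow> nat \<Rightarrow> real mat \<Rightarrow> real mat \<Rightarrow> nat" where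
  "obs_rank p n k C A = vec_space.rank (k * p) (obs_mat p n k C A)"

(* Lag: computed from any (here: a chosen) representation; the paper notes
   independence of the representation. *)
definition lag :: "nat \<Rightarrow> nat \<Rightarrow> (nat \<Rightarrow> real vec) set \<Rightarrow> nat" where
  "lag m p Bh = (case (SOME r. is_repr m p Bh r) of (n, A, B, C, D) \<Rightarrow>
      (LEAST k. obs_rank p n k C A = obs_rank p n (Suc k) C A))"

definition is_coeff :: "nat \<Rightarrow> real mat \<Rightarrow> bool" where
  "is_coeff q \<Psi> = ((\<exists>N. \<Psi> \<in> carrier_mat (N * q) (N * q)) \<and> transpose_mat \<Psi> = \<Psi>)"

(* window length N = M + 1 *)
definition wlen :: "nat \<Rightarrow> real mat \<Rightarrow> nat" where
  "wlen q \<Psi> = dim_row \<Psi> div q"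

definition window :: "nat \<Rightarrow> nat \<Rightarrow> (nat \<Rightarrow> real vec) \<Rightarrow> nat \<Rightarrow> real vec" where
  "window q N w t = vec (N * q) (\<lambda>i. w (t + i div q) $ (i mod q))"

definition QDF :: "nat \<Rightarrow> real mat \<Rightarrow> (nat \<Rightarrow> real vec) \<Rightarrow> nat \<Rightarrow> real" where
  "QDF q \<Psi> w t = (let v = window q (wlen q \<Psi>) w t in v \<bullet> (\<Psi> *\<^sub>v v))"

definition qdf_deg :: "nat \<Rightarrow> real mat \<Rightarrow> int" where
  "qdf_deg q \<Psi> = (LEAST d::int. d \<ge> -1 \<and>
     (\<forall>i j a b. i < wlen q \<Psi> \<longrightarrow> j < wlen q \<Psi> \<longrightarrow> a < q \<longrightarrow> b < q \<longrightarrow> int i > d \<longrightarrow>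
        \<Psi> $$ (i * q + a, j * q + b) = 0))"

definition nabla :: "nat \<Rightarrow> real mat \<Rightarrow> real mat" where
  "nabla q \<Psi> =
     four_block_mat (0\<^sub>m q q) (0\<^sub>m q (dim_row \<Psi>)) (0\<^sub>m (dim_row \<Psi>) q) \<Psi>
     - four_block_mat \<Psi> (0\<^sub>m (dim_row \<Psi>) q) (0\<^sub>m q (dim_row \<Psi>)) (0\<^sub>m q q)"

definition storage_function ::
    "nat \<Rightarrow> nat \<Rightarrow> (nat \<Rightarrow> real vec) set \<Rightarrow> real mat \<Rightarrow> real mat \<Rightarrow> bool" where
  "storage_function m p Bh \<Phi> \<Psi> =
     (is_coeff (m + p) \<Psi> \<and>
      (\<forall>w\<in>Bh. \<forall>t. QDF (m + p) \<Psi> w t \<ge> 0) \<and>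
      (\<forall>w\<in>Bh. \<forall>t. QDF (m + p) (nabla (m + p) \<Psi>) w t \<le> QDF (m + p) \<Phi> w t))"

definition dissipative :: "nat \<Rightarrow> nat \<Rightarrow> (nat \<Rightarrow> real vec) set \<Rightarrow> real mat \<Rightarrow> bool" where
  "dissipative m p Bh \<Phi> = (\<exists>\<Psi>. storage_function m p Bh \<Phi> \<Psi>)"

end

theory Submission
  imports Defs "Jordan_Normal_Form.Matrix_Kernel"
begin

text \<open>Let \<open>\<Psi>\<close> be a storage function of degree at most \<open>L \<ge> max (deg \<Phi>) \<ell>\<close>. Because \<open>L\<close>
  is at least the lag, the kernels of the observability matrices have stabilized, so on the
  behavior \<open>y(t + L) - D u(t + L)\<close> is a linear function of \<open>w(t), \<dots>, w(t + L - 1)\<close>. Let \<open>\<iota>\<close>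
  be the trajectory that vanishes before \<open>t + L\<close> and has input \<open>u(t + L)\<close> at \<open>t + L\<close>. Its
  storage at \<open>t\<close> is zero: it is nonnegative, and by dissipation it is bounded by the supply of a
  time-shifted copy at a time where that copy is still zero on the whole window. Nonnegativity
  of the storage along the line \<open>w + c \<iota>\<close> then shows that \<open>w - \<iota>\<close> has the same storage at \<open>t\<close>
  as \<open>w\<close>. Up to block \<open>L\<close>, the window of \<open>w - \<iota>\<close> is a linear function \<open>S\<close> of the first \<open>L\<close>
  blocks of the window of \<open>w\<close>, so \<open>S\<^sup>T \<Psi> S\<close> is a storage function of degree at most
  \<open>L - 1\<close>. Starting from any storage function and iterating gives the theorem.\<close>

section \<open>Rank and kernel\<close>

lemma rank_plus_kernel_dim:
  fixes M :: "'a::field mat"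
  assumes M: "M \<in> carrier_mat nr nc"
  shows "vec_space.rank nr M + kernel_dim M = nc"
proof -
  interpret NC: vec_space "TYPE('a)" nc .
  interpret NR: vec_space "TYPE('a)" nr .
  interpret K: kernel nr nc M by unfold_locales (rule M)
  interpret T: linear_map class_ring "module_vec TYPE('a) nc" "module_vec TYPE('a) nr" "\<lambda>v. M *\<^sub>v v"
    by (intro_locales, unfold mod_hom_axioms_def LinearCombinations.module_hom_def)
      (use M in \<open>auto simp: module_vec_def mult_add_distrib_mat_vec mult_mat_vec\<close>)
  have im: "T.imT = NR.col_space M"
    unfolding NR.col_space_eq[OF M] T.im_def using M by (auto simp: module_vec_def)
  have ker: "T.kerT = mat_kernel M"
    unfolding T.ker_def mat_kernel_def using M by (auto simp: module_vec_def)
  show ?thesis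
    using T.rank_nullity[OF NC.fin_dim] M NC.dim_is_n
    unfolding im ker NR.rank_def NR.col_space_def kernel_dim_def by simp
qed

lemma kernel_basis_lin_indpt_in_larger_kernel:
  fixes M1 M2 :: "'a::field mat"
  assumes M1: "M1 \<in> carrier_mat r1 nc" and M2: "M2 \<in> carrier_mat r2 nc"
    and sub: "mat_kernel M2 \<subseteq> mat_kernel M1"
  obtains b where "finite b" "card b = kernel_dim M2" "b \<subseteq> mat_kernel M1"
    "\<not> kernel.lin_dep nc M1 b" "kernel.span nc M2 b = kernel.span nc M1 b"
    "kernel.span nc M2 b = mat_kernel M2"
proof -
  interpret K1: kernel r1 nc M1 by unfold_locales (rule M1)
  interpret K2: kernel r2 nc M2 by unfold_locales (rule M2)
  obtain b where b: "finite b" "K2.basis b" using kernel_basis_exists[OF M2] by blast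
  have b2: "b \<subseteq> mat_kernel M2" "K2.span b = mat_kernel M2" "\<not> K2.lin_dep b"
    using b(2) unfolding K2.Ker.basis_def by auto
  show ?thesis
  proof
    show "finite b" by fact
    show "card b = kernel_dim M2" using K2.Ker.dim_basis[OF b] by simp
    show "b \<subseteq> mat_kernel M1" using b2 sub by auto
    then show "\<not> K1.lin_dep b" "K2.span b = K1.span b"
      using b2 K1.lindep_same K2.lindep_same K1.span_same K2.span_same by auto
  qed (use b2 in auto)
qed

lemma kernel_dim_mono:
  fixes M1 M2 :: "'a::field mat"
  assumes M1: "M1 \<in> carrier_mat r1 nc" and M2: "M2 \<in> carrier_mat r2 nc"
    and sub: "mat_kernel M2 \<subseteq> mat_kernel M1"
  shows "kernel_dim M2 \<le> kernel_dim M1"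
proof -
  interpret K1: kernel r1 nc M1 by unfold_locales (rule M1)
  obtain b where b: "card b = kernel_dim M2" "b \<subseteq> mat_kernel M1" "\<not> K1.lin_dep b"
    by (rule kernel_basis_lin_indpt_in_larger_kernel[OF M1 M2 sub])
  obtain b1 where "finite b1" "K1.basis b1" using kernel_basis_exists[OF M1] by blast
  then have "K1.Ker.fin_dim" unfolding K1.Ker.fin_dim_def K1.Ker.basis_def by auto
  from K1.Ker.li_le_dim(2)[OF this b(2,3)] show ?thesis by (simp add: b(1))
qed

lemma mat_kernel_eq_of_kernel_dim_le:
  fixes M1 M2 :: "'a::field mat"
  assumes M1: "M1 \<in> carrier_mat r1 nc" and M2: "M2 \<in> carrier_mat r2 nc"
    and sub: "mat_kernel M2 \<subseteq> mat_kernel M1" and dim: "kernel_dim M1 \<le> kernel_dim M2"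
  shows "mat_kernel M1 = mat_kernel M2"
proof -
  interpret K1: kernel r1 nc M1 by unfold_locales (rule M1)
  obtain b where b: "finite b" "card b = kernel_dim M2" "b \<subseteq> mat_kernel M1" "\<not> K1.lin_dep b"
    and span: "kernel.span nc M2 b = K1.span b" "kernel.span nc M2 b = mat_kernel M2"
    by (rule kernel_basis_lin_indpt_in_larger_kernel[OF M1 M2 sub])
  obtain b1 where "finite b1" "K1.basis b1" using kernel_basis_exists[OF M1] by blast
  then have "K1.Ker.fin_dim" unfolding K1.Ker.fin_dim_def K1.Ker.basis_def by auto
  then have "K1.basis b" using b dim by (intro K1.Ker.dim_li_is_basis) auto
  then have "mat_kernel M1 = K1.span b" unfolding K1.Ker.basis_def by auto
  then show ?thesis using span by simp
qed

lemma rank_mono_of_mat_kernel_subset: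
  fixes M1 M2 :: "'a::field mat"
  assumes M1: "M1 \<in> carrier_mat r1 nc" and M2: "M2 \<in> carrier_mat r2 nc"
    and sub: "mat_kernel M2 \<subseteq> mat_kernel M1"
  shows "vec_space.rank r1 M1 \<le> vec_space.rank r2 M2"
  using kernel_dim_mono[OF assms] rank_plus_kernel_dim[OF M1] rank_plus_kernel_dim[OF M2] by linarith

lemma mat_kernel_eq_of_rank_eq:
  fixes M1 M2 :: "'a::field mat"
  assumes M1: "M1 \<in> carrier_mat r1 nc" and M2: "M2 \<in> carrier_mat r2 nc"
    and sub: "mat_kernel M2 \<subseteq> mat_kernel M1"
    and rank: "vec_space.rank r1 M1 = vec_space.rank r2 M2"
  shows "mat_kernel M1 = mat_kernel M2"
  using rank_plus_kernel_dim[OF M1] rank_plus_kernel_dim[OF M2] rank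
  by (intro mat_kernel_eq_of_kernel_dim_le[OF M1 M2 sub]) linarith

lemma functional_lincomb_of_kernel_inclusion:
  fixes V :: "'a set" and cmb :: "'a \<Rightarrow> real \<Rightarrow> 'a \<Rightarrow> 'a"
    and \<phi> :: "'a \<Rightarrow> nat \<Rightarrow> real" and \<psi> :: "'a \<Rightarrow> real"
  assumes closed: "\<And>v w c. v \<in> V \<Longrightarrow> w \<in> V \<Longrightarrow> cmb v c w \<in> V"
    and \<phi>_lin: "\<And>v w c r. v \<in> V \<Longrightarrow> w \<in> V \<Longrightarrow> r < K \<Longrightarrow> \<phi> (cmb v c w) r = \<phi> v r + c * \<phi> w r"
    and \<psi>_lin: "\<And>v w c. v \<in> V \<Longrightarrow> w \<in> V \<Longrightarrow> \<psi> (cmb v c w) = \<psi> v + c * \<psi> w"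
    and ker: "\<And>v. v \<in> V \<Longrightarrow> (\<forall>r<K. \<phi> v r = 0) \<Longrightarrow> \<psi> v = 0"
  shows "\<exists>g. \<forall>v\<in>V. \<psi> v = (\<Sum>r<K. g r * \<phi> v r)"
  using closed \<phi>_lin \<psi>_lin ker
proof (induction K arbitrary: V)
  case (Suc K)
  define V' where "V' = {v\<in>V. \<phi> v K = 0}"
  have "\<exists>g. \<forall>v\<in>V'. \<psi> v = (\<Sum>r<K. g r * \<phi> v r)"
    by (rule Suc.IH) (use Suc.prems in \<open>auto simp: V'_def less_Suc_eq\<close>)
  then obtain g' where g': "\<And>v. v \<in> V' \<Longrightarrow> \<psi> v = (\<Sum>r<K. g' r * \<phi> v r)" by blast
  show ?case
  proof (cases "\<forall>v\<in>V. \<phi> v K = 0")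
    case True
    then show ?thesis using g' by (intro exI[of _ g']) (auto simp: V'_def)
  next
    case False
    then obtain v1 where v1: "v1 \<in> V" "\<phi> v1 K \<noteq> 0" by blast
    define v0 where "v0 = cmb v1 (1 / \<phi> v1 K - 1) v1"
    have v0: "v0 \<in> V" "\<phi> v0 K = 1"
      using v1 Suc.prems(1,2) by (simp_all add: v0_def algebra_simps)
    define g where "g r = (if r < K then g' r else \<psi> v0 - (\<Sum>r<K. g' r * \<phi> v0 r))" for r
    show ?thesis
    proof (intro exI[of _ g] ballI)
      fix v assume v: "v \<in> V"
      define v' where "v' = cmb v (- \<phi> v K) v0"
      have "v' \<in> V'" using v v0 Suc.prems(1,2) by (simp add: v'_def V'_def)
      moreover have "\<phi> v' r = \<phi> v r - \<phi> v K * \<phi> v0 r" if "r < K" for r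
        using v v0 Suc.prems(2) that by (simp add: v'_def)
      ultimately have "\<psi> v' = (\<Sum>r<K. g' r * (\<phi> v r - \<phi> v K * \<phi> v0 r))"
        using g' by simp
      also have "\<dots> = (\<Sum>r<K. g' r * \<phi> v r) - \<phi> v K * (\<Sum>r<K. g' r * \<phi> v0 r)"
        by (simp add: algebra_simps sum_subtractf sum_distrib_left)
      finally have "\<psi> v' = \<dots>" .
      moreover have "\<psi> v = \<psi> v' + \<phi> v K * \<psi> v0" using v v0 Suc.prems(3) by (simp add: v'_def)
      ultimately have "\<psi> v = (\<Sum>r<K. g' r * \<phi> v r) + \<phi> v K * (\<psi> v0 - (\<Sum>r<K. g' r * \<phi> v0 r))"
        by (simp add: algebra_simps)
      also have "\<dots> = (\<Sum>r<Suc K. g r * \<phi> v r)" by (simp add: g_def mult.commute)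
      finally show "\<psi> v = (\<Sum>r<Suc K. g r * \<phi> v r)" .
    qed
  qed
qed auto

section \<open>Quadratic forms\<close>

lemma mult_mat_vec_zero: "M \<in> carrier_mat nr nc \<Longrightarrow> M *\<^sub>v 0\<^sub>v nc = 0\<^sub>v nr"
  by (intro eq_vecI) (auto simp: scalar_prod_def)

lemma mult_mat_vec_add_smult:
  fixes M :: "'a::field mat"
  assumes "M \<in> carrier_mat nr nc" "v \<in> carrier_vec nc" "v' \<in> carrier_vec nc"
  shows "M *\<^sub>v (v + c \<cdot>\<^sub>v v') = M *\<^sub>v v + c \<cdot>\<^sub>v (M *\<^sub>v v')"
  using mult_add_distrib_mat_vec[OF assms(1,2), of "c \<cdot>\<^sub>v v'"] mult_mat_vec[OF assms(1,3)] assms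
  by simp

lemma quadratic_form_congruence:
  fixes S \<Psi> :: "'a::comm_ring_1 mat"
  assumes S: "S \<in> carrier_mat k n" and \<Psi>: "\<Psi> \<in> carrier_mat k k" and v: "v \<in> carrier_vec n"
  shows "v \<bullet> ((transpose_mat S * \<Psi> * S) *\<^sub>v v) = (S *\<^sub>v v) \<bullet> (\<Psi> *\<^sub>v (S *\<^sub>v v))"
proof -
  have Sv: "S *\<^sub>v v \<in> carrier_vec k" and \<Psi>Sv: "\<Psi> *\<^sub>v (S *\<^sub>v v) \<in> carrier_vec k" using S \<Psi> v by auto
  have "(transpose_mat S * \<Psi> * S) *\<^sub>v v = (transpose_mat S * \<Psi>) *\<^sub>v (S *\<^sub>v v)"
    using S \<Psi> v by (intro assoc_mult_mat_vec[of _ n k]) auto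
  also have "\<dots> = transpose_mat S *\<^sub>v (\<Psi> *\<^sub>v (S *\<^sub>v v))"
    using S \<Psi> v by (intro assoc_mult_mat_vec[of _ n k]) auto
  finally have "(transpose_mat S * \<Psi> * S) *\<^sub>v v = transpose_mat S *\<^sub>v (\<Psi> *\<^sub>v (S *\<^sub>v v))" .
  then have "v \<bullet> ((transpose_mat S * \<Psi> * S) *\<^sub>v v) = (transpose_mat S *\<^sub>v (\<Psi> *\<^sub>v (S *\<^sub>v v))) \<bullet> v"
    using S \<Psi>Sv v by (simp add: comm_scalar_prod[of v n])
  also have "\<dots> = (\<Psi> *\<^sub>v (S *\<^sub>v v)) \<bullet> (S *\<^sub>v v)" by (rule transpose_vec_mult_scalar[OF S v \<Psi>Sv])
  also have "\<dots> = (S *\<^sub>v v) \<bullet> (\<Psi> *\<^sub>v (S *\<^sub>v v))" by (rule comm_scalar_prod[OF \<Psi>Sv Sv])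
  finally show ?thesis .
qed

lemma quadratic_form_eq_sum:
  fixes \<Psi> :: "'a::comm_ring_1 mat"
  assumes "\<Psi> \<in> carrier_mat K K" and "v \<in> carrier_vec K"
  shows "v \<bullet> (\<Psi> *\<^sub>v v) = (\<Sum>i<K. \<Sum>j<K. v $ i * \<Psi> $$ (i, j) * v $ j)"
  using assms
  by (simp add: scalar_prod_def lessThan_atLeast0 sum_distrib_left mult.assoc)

lemma quadratic_form_cong_prefix:
  fixes \<Psi> :: "'a::comm_ring_1 mat"
  assumes \<Psi>: "\<Psi> \<in> carrier_mat K K" and v: "v \<in> carrier_vec K" and v': "v' \<in> carrier_vec K"
    and zero: "\<And>i j. i < K \<Longrightarrow> j < K \<Longrightarrow> M \<le> i \<or> M \<le> j \<Longrightarrow> \<Psi> $$ (i, j) = 0"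
    and eq: "\<And>i. i < M \<Longrightarrow> i < K \<Longrightarrow> v $ i = v' $ i"
  shows "v \<bullet> (\<Psi> *\<^sub>v v) = v' \<bullet> (\<Psi> *\<^sub>v v')"
  unfolding quadratic_form_eq_sum[OF \<Psi> v] quadratic_form_eq_sum[OF \<Psi> v']
proof (intro sum.cong refl)
  fix i j assume "i \<in> {..<K}" "j \<in> {..<K}"
  then show "v $ i * \<Psi> $$ (i, j) * v $ j = v' $ i * \<Psi> $$ (i, j) * v' $ j"
    using zero eq by (cases "i < M \<and> j < M") auto
qed

lemma quadratic_form_four_block_lower:
  fixes \<Psi> :: "'a::comm_ring_1 mat"
  assumes \<Psi>: "\<Psi> \<in> carrier_mat n n" and u: "u \<in> carrier_vec k" and v: "v \<in> carrier_vec n"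
  shows "(u @\<^sub>v v) \<bullet> (four_block_mat (0\<^sub>m k k) (0\<^sub>m k n) (0\<^sub>m n k) \<Psi> *\<^sub>v (u @\<^sub>v v)) = v \<bullet> (\<Psi> *\<^sub>v v)"
proof -
  have "0\<^sub>m k k *\<^sub>v u = 0\<^sub>v k" using u by (intro eq_vecI) (auto simp: scalar_prod_def)
  then show ?thesis using \<Psi> u v by (simp add: mult_mat_vec_split scalar_prod_append[of _ k _ n])
qed

lemma quadratic_form_four_block_upper:
  fixes \<Psi> :: "'a::comm_ring_1 mat"
  assumes \<Psi>: "\<Psi> \<in> carrier_mat n n" and u: "u \<in> carrier_vec k" and v: "v \<in> carrier_vec n"
  shows "(v @\<^sub>v u) \<bullet> (four_block_mat \<Psi> (0\<^sub>m n k) (0\<^sub>m k n) (0\<^sub>m k k) *\<^sub>v (v @\<^sub>v u)) = v \<bullet> (\<Psi> *\<^sub>v v)"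
proof -
  have "0\<^sub>m k k *\<^sub>v u = 0\<^sub>v k" using u by (intro eq_vecI) (auto simp: scalar_prod_def)
  then show ?thesis using \<Psi> u v by (simp add: mult_mat_vec_split scalar_prod_append[of _ n _ k])
qed

lemma transpose_congruence:
  fixes S \<Psi> :: "'a::comm_ring_1 mat"
  assumes S: "S \<in> carrier_mat k n" and \<Psi>: "\<Psi> \<in> carrier_mat k k" "transpose_mat \<Psi> = \<Psi>"
  shows "transpose_mat (transpose_mat S * \<Psi> * S) = transpose_mat S * \<Psi> * S"
proof -
  have "transpose_mat (transpose_mat S * \<Psi> * S) = transpose_mat S * transpose_mat (transpose_mat S * \<Psi>)"
    using S \<Psi> by (intro transpose_mult) auto
  also have "transpose_mat (transpose_mat S * \<Psi>) = \<Psi> * S"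
    using S \<Psi> by (subst transpose_mult) auto
  also have "transpose_mat S * (\<Psi> * S) = transpose_mat S * \<Psi> * S"
    using S \<Psi> by (intro assoc_mult_mat[symmetric]) auto
  finally show ?thesis .
qed

text \<open>A positive semidefinite quadratic function of \<open>c\<close> that has no quadratic term is constant.\<close>
lemma quadratic_form_null_direction:
  fixes \<Psi> :: "real mat"
  assumes \<Psi>: "\<Psi> \<in> carrier_mat K K" "transpose_mat \<Psi> = \<Psi>"
    and v: "v \<in> carrier_vec K" and b: "b \<in> carrier_vec K"
    and nonneg: "\<And>c. 0 \<le> (v + c \<cdot>\<^sub>v b) \<bullet> (\<Psi> *\<^sub>v (v + c \<cdot>\<^sub>v b))"
    and null: "b \<bullet> (\<Psi> *\<^sub>v b) = 0"
  shows "(v + c \<cdot>\<^sub>v b) \<bullet> (\<Psi> *\<^sub>v (v + c \<cdot>\<^sub>v b)) = v \<bullet> (\<Psi> *\<^sub>v v)"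
proof -
  define \<beta> where "\<beta> = v \<bullet> (\<Psi> *\<^sub>v b)"
  have sym: "b \<bullet> (\<Psi> *\<^sub>v v) = \<beta>"
  proof -
    have "b \<bullet> (\<Psi> *\<^sub>v v) = (transpose_mat \<Psi> *\<^sub>v b) \<bullet> v"
      by (rule transpose_vec_mult_scalar[OF \<Psi>(1) v b, symmetric])
    also have "\<dots> = \<beta>" using \<Psi> v b by (simp add: \<beta>_def comm_scalar_prod[of _ K v])
    finally show ?thesis .
  qed
  have expand: "(v + c \<cdot>\<^sub>v b) \<bullet> (\<Psi> *\<^sub>v (v + c \<cdot>\<^sub>v b)) = v \<bullet> (\<Psi> *\<^sub>v v) + 2 * c * \<beta>" for c
  proof -
    have "\<Psi> *\<^sub>v (v + c \<cdot>\<^sub>v b) = \<Psi> *\<^sub>v v + c \<cdot>\<^sub>v (\<Psi> *\<^sub>v b)"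
      by (rule mult_mat_vec_add_smult[OF \<Psi>(1) v b])
    then show ?thesis
      using \<Psi> v b null sym
      by (simp add: add_scalar_prod_distrib[of _ K] scalar_prod_add_distrib[of _ K] \<beta>_def algebra_simps)
  qed
  have "\<beta> = 0"
  proof (rule ccontr)
    assume "\<beta> \<noteq> 0"
    define c where "c = - (\<bar>v \<bullet> (\<Psi> *\<^sub>v v)\<bar> + 1) / (2 * \<beta>)"
    have "2 * c * \<beta> = - (\<bar>v \<bullet> (\<Psi> *\<^sub>v v)\<bar> + 1)" using \<open>\<beta> \<noteq> 0\<close> by (simp add: c_def)
    then show False using nonneg[of c] expand[of c] by linarith
  qed
  then show ?thesis using expand by simp
qed

section \<open>Observability\<close>

lemma mult_add_less_mult:
  fixes i a :: nat
  assumes "i < N" and "a < q"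
  shows "i * q + a < N * q"
proof -
  have "Suc i * q \<le> N * q" using assms(1) by (intro mult_le_mono1) simp
  then show ?thesis using assms(2) by simp
qed

lemma div_eq_of_block:
  fixes i q :: nat
  assumes "L * q \<le> i" and "i < Suc L * q"
  shows "i div q = L"
proof -
  have "L * q div q \<le> i div q" using assms(1) by (rule div_le_mono)
  moreover have "i div q < Suc L" using assms(2) by (rule less_mult_imp_div_less)
  ultimately show ?thesis using assms by (cases "q = 0") auto
qed

lemma pow_mat_add:
  assumes A: "A \<in> carrier_mat n n"
  shows "A ^\<^sub>m (a + b) = A ^\<^sub>m a * A ^\<^sub>m b"
proof (induction b)
  case (Suc b)
  have "A ^\<^sub>m (a + Suc b) = (A ^\<^sub>m a * A ^\<^sub>m b) * A" using Suc by simp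
  also have "\<dots> = A ^\<^sub>m a * (A ^\<^sub>m b * A)" using A by (intro assoc_mult_mat) auto
  finally show ?case by simp
qed (use A in simp)

lemma pow_mat_Suc_left:
  assumes A: "A \<in> carrier_mat n n"
  shows "A ^\<^sub>m (Suc k) = A * A ^\<^sub>m k"
  using pow_mat_add[OF A, of 1 k] A by simp

lemma obs_mat_carrier: "obs_mat p n k C A \<in> carrier_mat (k * p) n"
  by (simp add: obs_mat_def)

lemma mat_kernel_obs_mat:
  assumes p: "0 < p" and C: "C \<in> carrier_mat p n" and A: "A \<in> carrier_mat n n"
  shows "mat_kernel (obs_mat p n k C A) = {x \<in> carrier_vec n. \<forall>j<k. (C * A ^\<^sub>m j) *\<^sub>v x = 0\<^sub>v p}"
proof -
  have row_obs: "row (obs_mat p n k C A) i = row (C * A ^\<^sub>m (i div p)) (i mod p)"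
    if "i < k * p" for i
  proof -
    define K where "K = C * A ^\<^sub>m (i div p)"
    have K: "K \<in> carrier_mat p n" using C A by (simp add: K_def)
    have "obs_mat p n k C A $$ (i, j) = K $$ (i mod p, j)" if "j < n" for j
      using \<open>i < k * p\<close> that by (simp add: obs_mat_def K_def)
    then show ?thesis
      unfolding K_def[symmetric] using p K
      by (intro eq_vecI) (auto simp: row_def obs_mat_carrier[THEN carrier_matD(2)])
  qed
  have blocks: "(\<forall>i<k * p. P (i div p) (i mod p)) \<longleftrightarrow> (\<forall>j<k. \<forall>a<p. P j a)" for P
  proof safe
    fix j a assume P: "\<forall>i<k * p. P (i div p) (i mod p)" and "j < k" "a < p"
    then have "j * p + a < k * p" by (intro mult_add_less_mult)
    moreover have "(j * p + a) div p = j" "(j * p + a) mod p = a" using \<open>a < p\<close> by auto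
    ultimately show "P j a" using P by metis
  qed (use p in \<open>simp add: less_mult_imp_div_less\<close>)
  have "obs_mat p n k C A *\<^sub>v x = 0\<^sub>v (k * p) \<longleftrightarrow> (\<forall>j<k. (C * A ^\<^sub>m j) *\<^sub>v x = 0\<^sub>v p)" for x
  proof -
    have "obs_mat p n k C A *\<^sub>v x = 0\<^sub>v (k * p) \<longleftrightarrow> (\<forall>i<k * p. row (obs_mat p n k C A) i \<bullet> x = 0)"
      by (auto simp: vec_eq_iff obs_mat_carrier[THEN carrier_matD(1)])
    also have "\<dots> \<longleftrightarrow> (\<forall>i<k * p. row (C * A ^\<^sub>m (i div p)) (i mod p) \<bullet> x = 0)"
      using row_obs by auto
    also have "\<dots> \<longleftrightarrow> (\<forall>j<k. \<forall>a<p. row (C * A ^\<^sub>m j) a \<bullet> x = 0)"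
      by (rule blocks)
    also have "\<dots> \<longleftrightarrow> (\<forall>j<k. (C * A ^\<^sub>m j) *\<^sub>v x = 0\<^sub>v p)"
      using C A by (auto simp: vec_eq_iff)
    finally show ?thesis .
  qed
  then show ?thesis unfolding mat_kernel[OF obs_mat_carrier] by auto
qed

lemma mat_kernel_obs_mat_Suc_subset:
  assumes "0 < p" "C \<in> carrier_mat p n" "A \<in> carrier_mat n n"
  shows "mat_kernel (obs_mat p n (Suc k) C A) \<subseteq> mat_kernel (obs_mat p n k C A)"
  unfolding mat_kernel_obs_mat[OF assms] by auto

lemma obs_rank_Suc_mono:
  assumes "0 < p" "C \<in> carrier_mat p n" "A \<in> carrier_mat n n"
  shows "obs_rank p n k C A \<le> obs_rank p n (Suc k) C A"
  unfolding obs_rank_def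
  by (rule rank_mono_of_mat_kernel_subset[OF obs_mat_carrier obs_mat_carrier
        mat_kernel_obs_mat_Suc_subset[OF assms]])

lemma obs_rank_stabilizes:
  assumes "0 < p" "C \<in> carrier_mat p n" "A \<in> carrier_mat n n"
  shows "\<exists>k. obs_rank p n k C A = obs_rank p n (Suc k) C A"
proof (rule ccontr)
  assume "\<nexists>k. obs_rank p n k C A = obs_rank p n (Suc k) C A"
  then have "obs_rank p n k C A < obs_rank p n (Suc k) C A" for k
    using obs_rank_Suc_mono[OF assms, of k] le_neq_implies_less by blast
  then have "k \<le> obs_rank p n k C A" for k
    by (induction k) (auto simp: Suc_le_eq intro: le_less_trans)
  moreover have "obs_rank p n (Suc n) C A \<le> n"
    unfolding obs_rank_def by (rule vec_space.rank_le_nc[OF obs_mat_carrier])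
  ultimately show False by (metis not_less_eq_eq)
qed

text \<open>Shift the state by \<open>A ^ (L - l)\<close> and use that \<open>obs_mat l\<close> and \<open>obs_mat (Suc l)\<close>
  have the same kernel once their ranks agree.\<close>
lemma unobservable_Suc:
  assumes p: "0 < p" and C: "C \<in> carrier_mat p n" and A: "A \<in> carrier_mat n n"
    and rank: "obs_rank p n l C A = obs_rank p n (Suc l) C A" and "l \<le> L"
    and x: "x \<in> carrier_vec n" and unobs: "\<forall>j<L. (C * A ^\<^sub>m j) *\<^sub>v x = 0\<^sub>v p"
  shows "(C * A ^\<^sub>m L) *\<^sub>v x = 0\<^sub>v p"
proof -
  define y where "y = A ^\<^sub>m (L - l) *\<^sub>v x"
  have y: "y \<in> carrier_vec n" unfolding y_def by (rule mult_mat_vec_carrier[OF pow_carrier_mat[OF A] x])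
  have shift: "(C * A ^\<^sub>m j) *\<^sub>v y = (C * A ^\<^sub>m (j + (L - l))) *\<^sub>v x" for j
  proof -
    have "(C * A ^\<^sub>m j) *\<^sub>v y = ((C * A ^\<^sub>m j) * A ^\<^sub>m (L - l)) *\<^sub>v x"
      unfolding y_def using C A x by (intro assoc_mult_mat_vec[symmetric]) auto
    also have "(C * A ^\<^sub>m j) * A ^\<^sub>m (L - l) = C * A ^\<^sub>m (j + (L - l))"
      using C A by (simp add: pow_mat_add[OF A] assoc_mult_mat[of C p n _ n _ n])
    finally show ?thesis .
  qed
  have "mat_kernel (obs_mat p n l C A) = mat_kernel (obs_mat p n (Suc l) C A)"
    using rank unfolding obs_rank_def
    by (intro mat_kernel_eq_of_rank_eq[OF obs_mat_carrier obs_mat_carrier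
          mat_kernel_obs_mat_Suc_subset[OF p C A]])
  moreover have "y \<in> mat_kernel (obs_mat p n l C A)"
    unfolding mat_kernel_obs_mat[OF p C A] using y unobs \<open>l \<le> L\<close> by (simp add: shift)
  ultimately have "(C * A ^\<^sub>m l) *\<^sub>v y = 0\<^sub>v p"
    unfolding mat_kernel_obs_mat[OF p C A] by blast
  then show ?thesis using \<open>l \<le> L\<close> by (simp add: shift)
qed

section \<open>Signals and windows\<close>

lemma inp_carrier [simp]: "inp m v \<in> carrier_vec m"
  by (simp add: inp_def)

lemma outp_carrier [simp]: "outp m p v \<in> carrier_vec p"
  by (simp add: outp_def)

lemma dim_inp [simp]: "dim_vec (inp m v) = m"
  by (simp add: inp_def)

lemma dim_outp [simp]: "dim_vec (outp m p v) = p"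
  by (simp add: outp_def)

lemma inp_add_smult:
  "v \<in> carrier_vec (m + p) \<Longrightarrow> v' \<in> carrier_vec (m + p) \<Longrightarrow>
    inp m (v + c \<cdot>\<^sub>v v') = inp m v + c \<cdot>\<^sub>v inp m v'"
  by (auto simp: inp_def)

lemma outp_add_smult:
  "v \<in> carrier_vec (m + p) \<Longrightarrow> v' \<in> carrier_vec (m + p) \<Longrightarrow>
    outp m p (v + c \<cdot>\<^sub>v v') = outp m p v + c \<cdot>\<^sub>v outp m p v'"
  by (auto simp: outp_def)

lemma inp_zero [simp]: "inp m (0\<^sub>v (m + p)) = 0\<^sub>v m"
  by (auto simp: inp_def)

lemma outp_zero [simp]: "outp m p (0\<^sub>v (m + p)) = 0\<^sub>v p"
  by (auto simp: outp_def)

lemma inp_append [simp]: "u \<in> carrier_vec m \<Longrightarrow> inp m (u @\<^sub>v y) = u"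
  by (auto simp: inp_def)

lemma outp_append [simp]: "u \<in> carrier_vec m \<Longrightarrow> y \<in> carrier_vec p \<Longrightarrow> outp m p (u @\<^sub>v y) = y"
  by (auto simp: outp_def)

lemma carrier_window [simp]: "window q N w t \<in> carrier_vec (N * q)"
  by (simp add: window_def)

lemma dim_window [simp]: "dim_vec (window q N w t) = N * q"
  by (simp add: window_def)

lemma window_index [simp]: "i < N * q \<Longrightarrow> window q N w t $ i = w (t + i div q) $ (i mod q)"
  by (simp add: window_def)

lemma window_shift: "window q N (\<lambda>s. w (s + k)) t = window q N w (t + k)"
  by (simp add: window_def ac_simps)

lemma window_add_smult:
  assumes "0 < q" and "\<And>s. w s \<in> carrier_vec q" and "\<And>s. w' s \<in> carrier_vec q"
  shows "window q N (\<lambda>s. w s + c \<cdot>\<^sub>v w' s) t = window q N w t + c \<cdot>\<^sub>v window q N w' t"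
  using assms(1) carrier_vecD[OF assms(2)] carrier_vecD[OF assms(3)]
  by (intro eq_vecI) (simp_all add: window_def)

lemma window_zero: "0 < q \<Longrightarrow> window q N (\<lambda>_. 0\<^sub>v q) t = 0\<^sub>v (N * q)"
  by (intro eq_vecI) (auto simp: window_def)

lemma window_block:
  assumes "j < N" and "a < q"
  shows "window q N w t $ (j * q + a) = w (t + j) $ a"
  using mult_add_less_mult[OF assms] assms by (simp add: window_def)

lemma window_eq_0_imp_eq_0:
  assumes zero: "\<forall>r<L * q. window q L w t $ r = 0" and "s < L" and "w (t + s) \<in> carrier_vec q"
  shows "w (t + s) = 0\<^sub>v q"
proof (rule eq_vecI)
  fix a assume "a < dim_vec (0\<^sub>v q)"
  then have a: "a < q" by simp
  have "window q L w t $ (s * q + a) = 0" using zero mult_add_less_mult[OF \<open>s < L\<close> a] by blast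
  then show "w (t + s) $ a = 0\<^sub>v q $ a" using window_block[OF \<open>s < L\<close> a] a by simp
qed (use assms(3) in simp)

lemma window_prefix:
  assumes "L \<le> N"
  shows "vec (L * q) (\<lambda>r. window q N w t $ r) = window q L w t"
proof -
  have "r < N * q" if "r < L * q" for r using that assms by (meson less_le_trans mult_le_mono1)
  then show ?thesis by (intro eq_vecI) (auto simp: window_def)
qed

lemma window_Suc_left:
  "0 < q \<Longrightarrow> window q (Suc N) w t = vec q (\<lambda>i. w t $ i) @\<^sub>v window q N w (Suc t)"
  by (rule eq_vecI) (auto simp: window_def le_div_geq le_mod_geq not_less)

lemma window_Suc_right:
  assumes "0 < q"
  shows "window q (Suc N) w t = window q N w t @\<^sub>v vec q (\<lambda>i. w (t + N) $ i)"
proof (rule eq_vecI)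
  fix i assume "i < dim_vec (window q N w t @\<^sub>v vec q (\<lambda>i. w (t + N) $ i))"
  moreover have "i div q = N" "i mod q = i - N * q" if "N * q \<le> i" "i < N * q + q"
    using div_eq_of_block[of N q i] that by (simp_all add: minus_div_mult_eq_mod[symmetric])
  ultimately show "window q (Suc N) w t $ i = (window q N w t @\<^sub>v vec q (\<lambda>i. w (t + N) $ i)) $ i"
    by (auto simp: window_def less_mult_imp_div_less)
qed simp

section \<open>Quadratic difference forms\<close>

lemma wlen_eq: "0 < q \<Longrightarrow> \<Psi> \<in> carrier_mat (N * q) (N * q) \<Longrightarrow> wlen q \<Psi> = N"
  by (simp add: wlen_def)

lemma QDF_eq:
  assumes "0 < q" and "\<Psi> \<in> carrier_mat (N * q) (N * q)"
  shows "QDF q \<Psi> w t = window q N w t \<bullet> (\<Psi> *\<^sub>v window q N w t)"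
  using assms by (simp add: QDF_def wlen_eq Let_def)

lemma QDF_zero_signal:
  assumes "0 < q" and "\<Psi> \<in> carrier_mat (N * q) (N * q)"
  shows "QDF q \<Psi> (\<lambda>_. 0\<^sub>v q) t = 0"
  using assms by (simp add: QDF_eq window_zero)

lemma QDF_nabla:
  assumes q: "0 < q" and \<Psi>: "\<Psi> \<in> carrier_mat (N * q) (N * q)"
  shows "QDF q (nabla q \<Psi>) w t = QDF q \<Psi> w (Suc t) - QDF q \<Psi> w t"
proof -
  define u u' where "u = vec q (\<lambda>i. w t $ i)" and "u' = vec q (\<lambda>i. w (t + N) $ i)"
  define v v' where "v = window q N w (Suc t)" and "v' = window q N w t"
  have car: "u \<in> carrier_vec q" "u' \<in> carrier_vec q" "v \<in> carrier_vec (N * q)" "v' \<in> carrier_vec (N * q)"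
    by (simp_all add: u_def u'_def v_def v'_def)
  have "nabla q \<Psi> \<in> carrier_mat (Suc N * q) (Suc N * q)"
    using \<Psi> by (auto simp: nabla_def)
  then have "QDF q (nabla q \<Psi>) w t = window q (Suc N) w t \<bullet> (nabla q \<Psi> *\<^sub>v window q (Suc N) w t)"
    by (rule QDF_eq[OF q])
  also have "\<dots> = v \<bullet> (\<Psi> *\<^sub>v v) - v' \<bullet> (\<Psi> *\<^sub>v v')"
  proof -
    define W where "W = window q (Suc N) w t"
    have blocks:
      "four_block_mat (0\<^sub>m q q) (0\<^sub>m q (N * q)) (0\<^sub>m (N * q) q) \<Psi> \<in> carrier_mat (q + N * q) (q + N * q)"
      "four_block_mat \<Psi> (0\<^sub>m (N * q) q) (0\<^sub>m q (N * q)) (0\<^sub>m q q) \<in> carrier_mat (q + N * q) (q + N * q)"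
      using \<Psi> four_block_carrier_mat[OF \<Psi> zero_carrier_mat[of q q]] by (auto simp: add.commute)
    have W: "W \<in> carrier_vec (q + N * q)" using carrier_window[of q "Suc N" w t] by (simp add: W_def)
    have "W = u @\<^sub>v v" unfolding W_def u_def v_def by (rule window_Suc_left[OF q])
    then have lower: "W \<bullet> (four_block_mat (0\<^sub>m q q) (0\<^sub>m q (N * q)) (0\<^sub>m (N * q) q) \<Psi> *\<^sub>v W)
        = v \<bullet> (\<Psi> *\<^sub>v v)"
      using quadratic_form_four_block_lower[OF \<Psi> car(1,3)] by simp
    have "W = v' @\<^sub>v u'" unfolding W_def v'_def u'_def by (rule window_Suc_right[OF q])
    then have upper: "W \<bullet> (four_block_mat \<Psi> (0\<^sub>m (N * q) q) (0\<^sub>m q (N * q)) (0\<^sub>m q q) *\<^sub>v W)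
        = v' \<bullet> (\<Psi> *\<^sub>v v')"
      using quadratic_form_four_block_upper[OF \<Psi> car(2,4)] by simp
    show ?thesis
      unfolding W_def[symmetric] nabla_def carrier_matD(1)[OF \<Psi>] lower[symmetric] upper[symmetric]
        minus_mult_distrib_mat_vec[OF blocks W]
      by (rule scalar_prod_minus_distrib[OF W mult_mat_vec_carrier[OF blocks(1) W]
            mult_mat_vec_carrier[OF blocks(2) W]])
  qed
  finally show ?thesis using QDF_eq[OF q \<Psi>] by (simp add: v_def v'_def)
qed

lemma Least_int_ge:
  fixes P :: "int \<Rightarrow> bool"
  assumes "P d" and lb: "\<And>d. P d \<Longrightarrow> b \<le> d"
  shows "P (LEAST d. P d)" and "\<And>d. P d \<Longrightarrow> (LEAST d. P d) \<le> d"
proof -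
  define k where "k = (LEAST k::nat. P (b + int k))"
  have Pk: "P (b + int k)"
    unfolding k_def by (rule LeastI[of _ "nat (d - b)"]) (use assms in simp)
  have le: "b + int k \<le> d'" if "P d'" for d'
  proof -
    have "k \<le> nat (d' - b)" unfolding k_def by (rule Least_le) (use that lb[OF that] in simp)
    then show ?thesis using lb[OF that] by linarith
  qed
  have "(LEAST d. P d) = b + int k" by (rule Least_equality) (use Pk le in auto)
  then show "P (LEAST d. P d)" "\<And>d. P d \<Longrightarrow> (LEAST d. P d) \<le> d" using Pk le by simp_all
qed

lemma qdf_deg_le_iff:
  assumes "-1 \<le> d"
  shows "qdf_deg q \<Psi> \<le> d \<longleftrightarrow> (\<forall>i j a b. i < wlen q \<Psi> \<longrightarrow> j < wlen q \<Psi> \<longrightarrow> a < q \<longrightarrow> b < q \<longrightarrow>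
           d < int i \<longrightarrow> \<Psi> $$ (i * q + a, j * q + b) = 0)"
    (is "_ \<longleftrightarrow> ?Z d")
proof -
  let ?P = "\<lambda>d. -1 \<le> d \<and> ?Z d"
  have "?P (int (wlen q \<Psi>))" by simp
  note least = Least_int_ge[of ?P, OF this conjunct1]
  have deg: "qdf_deg q \<Psi> = (LEAST d. ?P d)" unfolding qdf_deg_def ..
  show ?thesis
  proof
    assume le: "qdf_deg q \<Psi> \<le> d"
    have Z: "?Z (qdf_deg q \<Psi>)" using least(1) unfolding deg by blast
    show "?Z d"
    proof (intro allI impI)
      fix i j a b assume "i < wlen q \<Psi>" "j < wlen q \<Psi>" "a < q" "b < q" "d < int i"
      moreover have "qdf_deg q \<Psi> < int i" using le \<open>d < int i\<close> by linarith
      ultimately show "\<Psi> $$ (i * q + a, j * q + b) = 0" using Z by blast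
    qed
  next
    assume "?Z d"
    then show "qdf_deg q \<Psi> \<le> d" using least(2) assms unfolding deg by blast
  qed
qed

lemma qdf_deg_le_wlen: "qdf_deg q \<Psi> \<le> int (wlen q \<Psi>) - 1"
  by (subst qdf_deg_le_iff) auto

lemma qdf_deg_le_entries_zero:
  assumes q: "0 < q" and \<Psi>: "\<Psi> \<in> carrier_mat (N * q) (N * q)" "transpose_mat \<Psi> = \<Psi>"
    and deg: "qdf_deg q \<Psi> \<le> int L"
    and ij: "i < N * q" "j < N * q" "Suc L * q \<le> i \<or> Suc L * q \<le> j"
  shows "\<Psi> $$ (i, j) = 0"
proof -
  have zero: "\<Psi> $$ (i, j) = 0" if "i < N * q" "j < N * q" "Suc L * q \<le> i" for i j
  proof -
    have "Suc L \<le> i div q" using div_le_mono[OF \<open>Suc L * q \<le> i\<close>, of q] q by simp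
    moreover have "i div q < N" "j div q < N" using that by (simp_all add: less_mult_imp_div_less)
    ultimately show ?thesis
      using deg q \<Psi>(1) unfolding qdf_deg_le_iff[of "int L", simplified] wlen_eq[OF q \<Psi>(1)]
      by (metis div_mult_mod_eq less_eq_Suc_le mod_less_divisor of_nat_less_iff)
  qed
  show ?thesis
  proof (cases "Suc L * q \<le> i")
    case False
    then have "\<Psi> $$ (j, i) = 0" using zero ij by blast
    then show ?thesis using ij \<Psi> by (metis carrier_matD index_transpose_mat(1))
  qed (use zero ij in blast)
qed

lemma qdf_deg_le_of_rows_zero:
  assumes q: "0 < q" and \<Psi>: "\<Psi> \<in> carrier_mat (N * q) (N * q)"
    and zero: "\<And>i j. L * q \<le> i \<Longrightarrow> i < N * q \<Longrightarrow> j < N * q \<Longrightarrow> \<Psi> $$ (i, j) = 0"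
  shows "qdf_deg q \<Psi> \<le> int L - 1"
proof (subst qdf_deg_le_iff, simp, intro allI impI)
  fix i j a b assume "i < wlen q \<Psi>" "j < wlen q \<Psi>" "a < q" "b < q" "int L - 1 < int i"
  then have "i < N" "j < N" "L \<le> i" "a < q" "b < q" by (simp_all add: wlen_eq[OF q \<Psi>])
  then show "\<Psi> $$ (i * q + a, j * q + b) = 0"
    by (intro zero mult_add_less_mult) (auto intro: trans_le_add1 mult_le_mono1)
qed

lemma QDF_cong:
  assumes q: "0 < q" and \<Psi>: "\<Psi> \<in> carrier_mat (N * q) (N * q)" "transpose_mat \<Psi> = \<Psi>"
    and deg: "qdf_deg q \<Psi> \<le> int L" and eq: "\<And>s. s \<le> L \<Longrightarrow> w (t + s) = w' (t' + s)"
  shows "QDF q \<Psi> w t = QDF q \<Psi> w' t'"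
  unfolding QDF_eq[OF q \<Psi>(1)]
proof (rule quadratic_form_cong_prefix[OF \<Psi>(1) carrier_window carrier_window])
  show "\<Psi> $$ (i, j) = 0" if "i < N * q" "j < N * q" "Suc L * q \<le> i \<or> Suc L * q \<le> j" for i j
    by (rule qdf_deg_le_entries_zero[OF q \<Psi> deg that])
  show "window q N w t $ i = window q N w' t' $ i" if "i < Suc L * q" "i < N * q" for i
  proof -
    have "i div q < Suc L" by (rule less_mult_imp_div_less) (use that in simp)
    then show ?thesis using that eq[of "i div q"] by simp
  qed
qed

section \<open>Behaviors\<close>

lemma behavior_carrier: "w \<in> behavior m p n A B C D \<Longrightarrow> w t \<in> carrier_vec (m + p)"
  unfolding behavior_def by blast

lemma behaviorE:
  assumes "w \<in> behavior m p n A B C D"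
  obtains x where "\<And>t. x t \<in> carrier_vec n" "\<And>t. x (Suc t) = A *\<^sub>v x t + B *\<^sub>v inp m (w t)"
    "\<And>t. outp m p (w t) = C *\<^sub>v x t + D *\<^sub>v inp m (w t)"
proof -
  from assms obtain x where "\<forall>t. x t \<in> carrier_vec n"
    "\<forall>t. x (Suc t) = A *\<^sub>v x t + B *\<^sub>v inp m (w t) \<and> outp m p (w t) = C *\<^sub>v x t + D *\<^sub>v inp m (w t)"
    unfolding behavior_def by blast
  then show thesis using that by blast
qed

lemma behavior_shift:
  assumes w: "w \<in> behavior m p n A B C D"
  shows "(\<lambda>t. w (t + k)) \<in> behavior m p n A B C D"
proof -
  obtain x where "\<And>t. x t \<in> carrier_vec n" "\<And>t. x (Suc t) = A *\<^sub>v x t + B *\<^sub>v inp m (w t)"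
    "\<And>t. outp m p (w t) = C *\<^sub>v x t + D *\<^sub>v inp m (w t)" using w by (rule behaviorE) blast
  then show ?thesis
    using behavior_carrier[OF w] unfolding behavior_def by (auto intro!: exI[of _ "\<lambda>t. x (t + k)"])
qed

locale state_space =
  fixes m p n :: nat and A B C D :: "real mat"
  assumes A: "A \<in> carrier_mat n n" and B: "B \<in> carrier_mat n m"
    and C: "C \<in> carrier_mat p n" and D: "D \<in> carrier_mat p m"
    and p: "0 < p"
begin

abbreviation beh :: "(nat \<Rightarrow> real vec) set" where
  "beh \<equiv> behavior m p n A B C D"

lemma carrier_mult_system_mat [simp]:
  "v \<in> carrier_vec n \<Longrightarrow> A *\<^sub>v v \<in> carrier_vec n"
  "v \<in> carrier_vec n \<Longrightarrow> A ^\<^sub>m k *\<^sub>v v \<in> carrier_vec n"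
  "u \<in> carrier_vec m \<Longrightarrow> B *\<^sub>v u \<in> carrier_vec n"
  "v \<in> carrier_vec n \<Longrightarrow> C *\<^sub>v v \<in> carrier_vec p"
  "u \<in> carrier_vec m \<Longrightarrow> D *\<^sub>v u \<in> carrier_vec p"
  using A B C D mult_mat_vec_carrier[OF pow_carrier_mat[OF A]] by auto

lemma behavior_add_smult:
  assumes w: "w \<in> beh" and w': "w' \<in> beh"
  shows "(\<lambda>t. w t + c \<cdot>\<^sub>v w' t) \<in> beh"
proof -
  obtain x where x: "\<And>t. x t \<in> carrier_vec n" "\<And>t. x (Suc t) = A *\<^sub>v x t + B *\<^sub>v inp m (w t)"
    "\<And>t. outp m p (w t) = C *\<^sub>v x t + D *\<^sub>v inp m (w t)" using w by (rule behaviorE) blast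
  obtain x' where x': "\<And>t. x' t \<in> carrier_vec n" "\<And>t. x' (Suc t) = A *\<^sub>v x' t + B *\<^sub>v inp m (w' t)"
    "\<And>t. outp m p (w' t) = C *\<^sub>v x' t + D *\<^sub>v inp m (w' t)" using w' by (rule behaviorE) blast
  have wc: "w t \<in> carrier_vec (m + p)" "w' t \<in> carrier_vec (m + p)" for t
    using w w' by (auto intro: behavior_carrier)
  show ?thesis
    unfolding behavior_def
  proof (intro CollectI conjI allI exI[of _ "\<lambda>t. x t + c \<cdot>\<^sub>v x' t"])
    fix t
    show "w t + c \<cdot>\<^sub>v w' t \<in> carrier_vec (m + p)" "x t + c \<cdot>\<^sub>v x' t \<in> carrier_vec n"
      using wc x x' by auto
    show "x (Suc t) + c \<cdot>\<^sub>v x' (Suc t) =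
        A *\<^sub>v (x t + c \<cdot>\<^sub>v x' t) + B *\<^sub>v inp m (w t + c \<cdot>\<^sub>v w' t)"
      unfolding x(2) x'(2) inp_add_smult[OF wc] mult_mat_vec_add_smult[OF A x(1) x'(1)]
        mult_mat_vec_add_smult[OF B inp_carrier inp_carrier]
      using A B x(1) x'(1) by (intro eq_vecI) (auto simp: algebra_simps)
    show "outp m p (w t + c \<cdot>\<^sub>v w' t) =
        C *\<^sub>v (x t + c \<cdot>\<^sub>v x' t) + D *\<^sub>v inp m (w t + c \<cdot>\<^sub>v w' t)"
      unfolding outp_add_smult[OF wc] inp_add_smult[OF wc] x(3) x'(3)
        mult_mat_vec_add_smult[OF C x(1) x'(1)] mult_mat_vec_add_smult[OF D inp_carrier inp_carrier]
      using C D x(1) x'(1) by (intro eq_vecI) (auto simp: algebra_simps)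
  qed
qed

definition lag_index :: nat where
  "lag_index = (LEAST k. obs_rank p n k C A = obs_rank p n (Suc k) C A)"

lemma obs_rank_lag_index: "obs_rank p n lag_index C A = obs_rank p n (Suc lag_index) C A"
  unfolding lag_index_def by (rule LeastI_ex[OF obs_rank_stabilizes[OF p C A]])

text \<open>The part \<open>y - D u = C x\<close> of the output that is due to the state.\<close>
definition state_output :: "(nat \<Rightarrow> real vec) \<Rightarrow> nat \<Rightarrow> real vec" where
  "state_output w t = outp m p (w t) - D *\<^sub>v inp m (w t)"

lemma dim_state_output [simp]: "dim_vec (state_output w t) = p"
  using D by (simp add: state_output_def)

lemma state_output_add_smult:
  assumes "w \<in> beh" and "w' \<in> beh"
  shows "state_output (\<lambda>s. w s + c \<cdot>\<^sub>v w' s) t = state_output w t + c \<cdot>\<^sub>v state_output w' t"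
proof -
  have "state_output (\<lambda>s. w s + c \<cdot>\<^sub>v w' s) t = (outp m p (w t) + c \<cdot>\<^sub>v outp m p (w' t))
      - (D *\<^sub>v inp m (w t) + c \<cdot>\<^sub>v (D *\<^sub>v inp m (w' t)))"
    by (simp add: state_output_def outp_add_smult[OF behavior_carrier[OF assms(1)] behavior_carrier[OF assms(2)]]
        inp_add_smult[OF behavior_carrier[OF assms(1)] behavior_carrier[OF assms(2)]] mult_mat_vec_add_smult[OF D])
  then show ?thesis using D by (intro eq_vecI) (simp_all add: state_output_def algebra_simps)
qed

text \<open>A trajectory vanishing on \<open>[0, L)\<close> starts in a state that is unobservable for \<open>L\<close>
  steps, hence, as \<open>L\<close> is at least the lag, also for \<open>L + 1\<close> steps.\<close>
lemma state_output_after_zero_past: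
  assumes w: "w \<in> beh" and "lag_index \<le> L" and zero: "\<And>t. t < L \<Longrightarrow> w t = 0\<^sub>v (m + p)"
  shows "state_output w L = 0\<^sub>v p"
proof -
  obtain x where x: "\<And>t. x t \<in> carrier_vec n" "\<And>t. x (Suc t) = A *\<^sub>v x t + B *\<^sub>v inp m (w t)"
    "\<And>t. outp m p (w t) = C *\<^sub>v x t + D *\<^sub>v inp m (w t)" using w by (rule behaviorE) blast
  have x_pow: "x t = A ^\<^sub>m t *\<^sub>v x 0" if "t \<le> L" for t
    using that
  proof (induction t)
    case (Suc t)
    have "x (Suc t) = A *\<^sub>v x t"
      using zero[of t] Suc.prems mult_mat_vec_carrier[OF A x(1)] B by (simp add: x(2) mult_mat_vec_zero)
    also have "\<dots> = A ^\<^sub>m (Suc t) *\<^sub>v x 0"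
      unfolding pow_mat_Suc_left[OF A] using Suc x(1)
      by (simp add: assoc_mult_mat_vec[OF A pow_carrier_mat[OF A]])
    finally show ?case .
  qed (use A x(1) in simp)
  have "(C * A ^\<^sub>m j) *\<^sub>v x 0 = 0\<^sub>v p" if "j < L" for j
  proof -
    have "(C * A ^\<^sub>m j) *\<^sub>v x 0 = C *\<^sub>v x j"
      using that x(1) x_pow[of j] by (simp add: assoc_mult_mat_vec[OF C pow_carrier_mat[OF A]])
    also have "\<dots> = 0\<^sub>v p" using x(3)[of j] zero[OF that] x(1) D by (simp add: mult_mat_vec_zero)
    finally show ?thesis .
  qed
  then have "(C * A ^\<^sub>m L) *\<^sub>v x 0 = 0\<^sub>v p"
    using unobservable_Suc[OF p C A obs_rank_lag_index \<open>lag_index \<le> L\<close> x(1)] by blast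
  then have "C *\<^sub>v x L = 0\<^sub>v p"
    using x(1) x_pow[of L] by (simp add: assoc_mult_mat_vec[OF C pow_carrier_mat[OF A]])
  then show ?thesis using x(3)[of L] D by (simp add: state_output_def)
qed

definition impulse :: "nat \<Rightarrow> real vec \<Rightarrow> nat \<Rightarrow> real vec" where
  "impulse T u t = (if t < T then 0\<^sub>v (m + p) else if t = T then u @\<^sub>v (D *\<^sub>v u)
     else 0\<^sub>v m @\<^sub>v (C *\<^sub>v (A ^\<^sub>m (t - Suc T) *\<^sub>v (B *\<^sub>v u))))"

lemma impulse_in_beh:
  assumes u: "u \<in> carrier_vec m"
  shows "impulse T u \<in> beh"
proof -
  define x where "x t = (if t \<le> T then 0\<^sub>v n else A ^\<^sub>m (t - Suc T) *\<^sub>v (B *\<^sub>v u))" for t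
  have x: "x t \<in> carrier_vec n" for t
    using A B u by (auto simp: x_def intro!: mult_mat_vec_carrier[OF pow_carrier_mat[OF A]])
  have "x (Suc t) = A *\<^sub>v x t + B *\<^sub>v inp m (impulse T u t) \<and>
      outp m p (impulse T u t) = C *\<^sub>v x t + D *\<^sub>v inp m (impulse T u t)" for t
  proof (cases t T rule: linorder_cases)
    case less
    then show ?thesis using A B C D by (simp add: x_def impulse_def mult_mat_vec_zero)
  next
    case equal
    then show ?thesis using A B C D u by (simp add: x_def impulse_def mult_mat_vec_zero)
  next
    case greater
    have "A ^\<^sub>m (Suc (t - Suc T)) *\<^sub>v (B *\<^sub>v u) = A *\<^sub>v (A ^\<^sub>m (t - Suc T) *\<^sub>v (B *\<^sub>v u))"
      unfolding pow_mat_Suc_left[OF A] using B u by (simp add: assoc_mult_mat_vec[OF A pow_carrier_mat[OF A]])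
    moreover have "Suc t - Suc T = Suc (t - Suc T)" using greater by simp
    ultimately show ?thesis
      using greater A B C D u x by (simp add: x_def impulse_def mult_mat_vec_zero)
  qed
  moreover have "impulse T u t \<in> carrier_vec (m + p)" for t
    using C D u by (simp add: impulse_def)
  ultimately show ?thesis unfolding behavior_def using x by blast
qed

lemma state_output_predictor:
  assumes "lag_index \<le> L"
  obtains G where "G \<in> carrier_mat p (L * (m + p))"
    "\<And>w t. w \<in> beh \<Longrightarrow> state_output w (t + L) = G *\<^sub>v window (m + p) L w t"
proof -
  have "\<exists>g. \<forall>w\<in>beh. state_output w L $ i = (\<Sum>r<L * (m + p). g r * window (m + p) L w 0 $ r)"
    if "i < p" for i
  proof (rule functional_lincomb_of_kernel_inclusion[where cmb = "\<lambda>v c w t. v t + c \<cdot>\<^sub>v w t"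
        and \<phi> = "\<lambda>w r. window (m + p) L w 0 $ r" and \<psi> = "\<lambda>w. state_output w L $ i"])
    fix v w c r assume "v \<in> beh" "w \<in> beh" "r < L * (m + p)"
    then show "window (m + p) L (\<lambda>t. v t + c \<cdot>\<^sub>v w t) 0 $ r =
        window (m + p) L v 0 $ r + c * window (m + p) L w 0 $ r"
      using p by (simp add: window_add_smult behavior_carrier)
  next
    fix v assume v: "v \<in> beh" and "\<forall>r<L * (m + p). window (m + p) L v 0 $ r = 0"
    then have "v t = 0\<^sub>v (m + p)" if "t < L" for t
      using window_eq_0_imp_eq_0[of L "m + p" v 0 t] that behavior_carrier[OF v] by simp
    then show "state_output v L $ i = 0"
      using state_output_after_zero_past[OF v assms] \<open>i < p\<close> by simp
  qed (use \<open>i < p\<close> in \<open>simp_all add: behavior_add_smult state_output_add_smult\<close>)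
  then obtain g where g: "\<And>i w. i < p \<Longrightarrow> w \<in> beh \<Longrightarrow>
      state_output w L $ i = (\<Sum>r<L * (m + p). g i r * window (m + p) L w 0 $ r)"
    by metis
  define G where "G = mat p (L * (m + p)) (\<lambda>(i, r). g i r)"
  show thesis
  proof (rule that)
    show "G \<in> carrier_mat p (L * (m + p))" by (simp add: G_def)
    fix w t assume "w \<in> beh"
    then have shifted: "(\<lambda>s. w (s + t)) \<in> beh" by (rule behavior_shift)
    have "state_output w (t + L) = state_output (\<lambda>s. w (s + t)) L"
      by (simp add: state_output_def add.commute)
    also have "\<dots> = G *\<^sub>v window (m + p) L (\<lambda>s. w (s + t)) 0"
      using g[OF _ shifted] D
      by (intro eq_vecI) (simp_all add: state_output_def G_def scalar_prod_def lessThan_atLeast0)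
    finally show "state_output w (t + L) = G *\<^sub>v window (m + p) L w t"
      by (simp add: window_shift)
  qed
qed

section \<open>Lowering the degree of a storage function\<close>

text \<open>The matrix \<open>S\<close> of the congruence \<open>S\<^sup>T \<Psi> S\<close> that lowers the degree: on a window of length
  \<open>N\<close> it keeps the first \<open>L\<close> blocks, replaces block \<open>L\<close> by \<open>(0, G v)\<close> where \<open>v\<close> is the window of
  the first \<open>L\<close> blocks, and discards the remaining blocks.\<close>
definition reduction_mat :: "nat \<Rightarrow> nat \<Rightarrow> real mat \<Rightarrow> real mat" where
  "reduction_mat N L G = mat (N * (m + p)) (N * (m + p)) (\<lambda>(i, r).
     if i < L * (m + p) then of_bool (i = r)
     else if i div (m + p) = L \<and> m \<le> i mod (m + p) \<and> r < L * (m + p)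
     then G $$ (i mod (m + p) - m, r) else 0)"

lemma reduction_mat_carrier: "reduction_mat N L G \<in> carrier_mat (N * (m + p)) (N * (m + p))"
  by (simp add: reduction_mat_def)

lemma reduction_mat_mult_vec:
  assumes "L < N" and G: "G \<in> carrier_mat p (L * (m + p))"
    and v: "v \<in> carrier_vec (N * (m + p))" and i: "i < Suc L * (m + p)"
  shows "(reduction_mat N L G *\<^sub>v v) $ i =
    (if i < L * (m + p) then v $ i
     else if m \<le> i mod (m + p) then (G *\<^sub>v vec (L * (m + p)) (\<lambda>r. v $ r)) $ (i mod (m + p) - m)
     else 0)"
proof -
  let ?q = "m + p"
  have "i < N * ?q" using i \<open>L < N\<close> by (meson less_le_trans mult_le_mono1 Suc_leI)
  then have Sv: "(reduction_mat N L G *\<^sub>v v) $ i = (\<Sum>r<N * ?q. reduction_mat N L G $$ (i, r) * v $ r)"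
    using v by (simp add: reduction_mat_def scalar_prod_def lessThan_atLeast0)
  show ?thesis
  proof (cases "i < L * ?q")
    case True
    then show ?thesis unfolding Sv using \<open>i < N * ?q\<close>
      by (simp add: reduction_mat_def of_bool_def if_distrib[of "\<lambda>x. x * _"] cong: if_cong)
  next
    case False
    then have "i div ?q = L" using i by (intro div_eq_of_block) simp_all
    have LN: "L * ?q \<le> N * ?q" using \<open>L < N\<close> by simp
    show ?thesis
    proof (cases "m \<le> i mod ?q")
      case True
      have "(\<Sum>r<N * ?q. reduction_mat N L G $$ (i, r) * v $ r)
          = (\<Sum>r<N * ?q. if r < L * ?q then G $$ (i mod ?q - m, r) * v $ r else 0)"
        using \<open>i < N * ?q\<close> False True \<open>i div ?q = L\<close> by (intro sum.cong) (auto simp: reduction_mat_def)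
      also have "\<dots> = (\<Sum>r<L * ?q. G $$ (i mod ?q - m, r) * v $ r)"
      proof -
        have "{r \<in> {..<N * ?q}. r < L * ?q} = {..<L * ?q}" by (auto intro: less_le_trans[OF _ LN])
        then show ?thesis by (subst sum.inter_filter[symmetric]) simp_all
      qed
      also have "\<dots> = (G *\<^sub>v vec (L * ?q) (\<lambda>r. v $ r)) $ (i mod ?q - m)"
      proof -
        have "i mod ?q < ?q" using p by simp
        then have "i mod ?q - m < p" using True by linarith
        then show ?thesis using G by (simp add: scalar_prod_def lessThan_atLeast0)
      qed
      finally show ?thesis unfolding Sv using False True by simp
    next
      case False
      then show ?thesis unfolding Sv using \<open>\<not> i < L * ?q\<close> \<open>i < N * ?q\<close>
        by (simp add: reduction_mat_def sum.neutral)
    qed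
  qed
qed

lemma congruence_reduction_mat_row_zero:
  assumes \<Psi>: "\<Psi> \<in> carrier_mat (N * (m + p)) (N * (m + p))"
    and j: "L * (m + p) \<le> j" "j < N * (m + p)" and "k < N * (m + p)"
  shows "(transpose_mat (reduction_mat N L G) * \<Psi> * reduction_mat N L G) $$ (j, k) = 0"
proof -
  let ?S = "reduction_mat N L G"
  have S: "?S \<in> carrier_mat (N * (m + p)) (N * (m + p))" by (rule reduction_mat_carrier)
  have "col ?S j = 0\<^sub>v (N * (m + p))"
    using j by (intro eq_vecI) (auto simp: reduction_mat_def)
  moreover have "transpose_mat ?S * \<Psi> * ?S = transpose_mat ?S * (\<Psi> * ?S)"
    using S \<Psi> by (intro assoc_mult_mat) auto
  ultimately show ?thesis using S \<Psi> j \<open>k < N * (m + p)\<close> by simp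
qed

text \<open>Nonnegativity along the whole line \<open>w + c \<iota>\<close> forces the cross term to vanish.\<close>
lemma QDF_add_null_trajectory:
  assumes sf: "storage_function m p beh \<Phi> \<Psi>"
    and \<Psi>: "\<Psi> \<in> carrier_mat (N * (m + p)) (N * (m + p))" "transpose_mat \<Psi> = \<Psi>"
    and w: "w \<in> beh" and \<iota>: "\<iota> \<in> beh" and null: "QDF (m + p) \<Psi> \<iota> t = 0"
  shows "QDF (m + p) \<Psi> (\<lambda>s. w s + c \<cdot>\<^sub>v \<iota> s) t = QDF (m + p) \<Psi> w t"
proof -
  have q: "0 < m + p" using p by simp
  have win: "window (m + p) N (\<lambda>s. w s + c \<cdot>\<^sub>v \<iota> s) t = window (m + p) N w t + c \<cdot>\<^sub>v window (m + p) N \<iota> t"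
    for c by (rule window_add_smult[OF q behavior_carrier[OF w] behavior_carrier[OF \<iota>]])
  have "0 \<le> QDF (m + p) \<Psi> (\<lambda>s. w s + c \<cdot>\<^sub>v \<iota> s) t" for c
    using sf behavior_add_smult[OF w \<iota>] unfolding storage_function_def by blast
  then show ?thesis
    unfolding QDF_eq[OF q \<Psi>(1)] win
    by (intro quadratic_form_null_direction[OF \<Psi> carrier_window carrier_window])
      (use null QDF_eq[OF q \<Psi>(1)] in simp_all)
qed

text \<open>The impulse applied at \<open>t + L\<close> carries zero storage at \<open>t\<close>: the storage is nonnegative, and
  dissipation from time \<open>0\<close>, where both \<open>Q\<^sub>\<Psi>\<close> and \<open>Q\<^sub>\<Phi>\<close> still see only zeros, bounds it by \<open>0\<close>.\<close>
lemma QDF_impulse_eq_0: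
  assumes sf: "storage_function m p beh \<Phi> \<Psi>"
    and \<Psi>: "\<Psi> \<in> carrier_mat (N * (m + p)) (N * (m + p))" "transpose_mat \<Psi> = \<Psi>"
      "qdf_deg (m + p) \<Psi> \<le> int L"
    and \<Phi>: "\<Phi> \<in> carrier_mat (N\<Phi> * (m + p)) (N\<Phi> * (m + p))" "transpose_mat \<Phi> = \<Phi>"
      "qdf_deg (m + p) \<Phi> \<le> int L"
    and u: "u \<in> carrier_vec m"
  shows "QDF (m + p) \<Psi> (impulse (t + L) u) t = 0"
proof -
  have q: "0 < m + p" using p by simp
  define \<kappa> where "\<kappa> = impulse (Suc L) u"
  have \<kappa>: "\<kappa> \<in> beh" unfolding \<kappa>_def by (rule impulse_in_beh[OF u])
  have "QDF (m + p) \<Psi> (impulse (t + L) u) t = QDF (m + p) \<Psi> \<kappa> (Suc 0)"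
    by (rule QDF_cong[OF q \<Psi>]) (simp add: \<kappa>_def impulse_def)
  moreover have "QDF (m + p) \<Psi> \<kappa> 0 = 0" "QDF (m + p) \<Phi> \<kappa> 0 = 0"
    using QDF_cong[OF q \<Psi>, where w = \<kappa> and t = 0 and w' = "\<lambda>_. 0\<^sub>v (m + p)" and t' = 0]
      QDF_cong[OF q \<Phi>, where w = \<kappa> and t = 0 and w' = "\<lambda>_. 0\<^sub>v (m + p)" and t' = 0]
      QDF_zero_signal[OF q \<Psi>(1)] QDF_zero_signal[OF q \<Phi>(1)]
    by (simp_all add: \<kappa>_def impulse_def)
  moreover have "QDF (m + p) (nabla (m + p) \<Psi>) \<kappa> 0 \<le> QDF (m + p) \<Phi> \<kappa> 0"
    "0 \<le> QDF (m + p) \<Psi> \<kappa> (Suc 0)"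
    using sf \<kappa> unfolding storage_function_def by blast+
  ultimately show ?thesis using QDF_nabla[OF q \<Psi>(1), of \<kappa> 0] by linarith
qed

text \<open>On the first \<open>L + 1\<close> blocks, \<open>S\<close> maps the window of \<open>w\<close> to that of \<open>w - \<iota>\<close>, where \<open>\<iota>\<close> is
  the impulse with input \<open>u(t + L)\<close> at \<open>t + L\<close>: below block \<open>L\<close> nothing changes, and in block \<open>L\<close>
  the input is cancelled and the output becomes the predicted state output.\<close>
lemma reduction_mat_mult_window:
  assumes "L < N" and G: "G \<in> carrier_mat p (L * (m + p))"
    and predict: "state_output w (t + L) = G *\<^sub>v window (m + p) L w t"
    and w: "w \<in> beh" and i: "i < Suc L * (m + p)" "i < N * (m + p)"
  shows "(reduction_mat N L G *\<^sub>v window (m + p) N w t) $ i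
    = window (m + p) N (\<lambda>s. w s + (-1) \<cdot>\<^sub>v impulse (t + L) (inp m (w (t + L))) s) t $ i"
    (is "_ = window _ _ (\<lambda>s. w s + (-1) \<cdot>\<^sub>v ?\<iota> s) _ $ i")
proof -
  let ?q = "m + p"
  define u where "u = inp m (w (t + L))"
  define a where "a = i mod ?q"
  have a: "a < ?q" using p by (simp add: a_def)
  have \<iota>: "?\<iota> \<in> beh" by (rule impulse_in_beh) simp
  have dims: "dim_vec (w s) = ?q" "dim_vec (?\<iota> s) = ?q" for s
    using behavior_carrier[OF w] behavior_carrier[OF \<iota>] by (simp_all add: carrier_vecD)
  have rhs: "window ?q N (\<lambda>s. w s + (-1) \<cdot>\<^sub>v ?\<iota> s) t $ i = w (t + i div ?q) $ a - ?\<iota> (t + i div ?q) $ a"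
    using i dims a by (simp add: a_def)
  show ?thesis
  proof (cases "i < L * ?q")
    case True
    then have "i div ?q < L" by (simp add: less_mult_imp_div_less)
    then show ?thesis
      using True i rhs a \<open>L < N\<close> G by (simp add: reduction_mat_mult_vec impulse_def a_def)
  next
    case False
    then have "i div ?q = L" using i by (intro div_eq_of_block) simp_all
    then have rhs_L: "window ?q N (\<lambda>s. w s + (-1) \<cdot>\<^sub>v ?\<iota> s) t $ i = w (t + L) $ a - (u @\<^sub>v D *\<^sub>v u) $ a"
      using rhs by (simp add: impulse_def u_def)
    show ?thesis
    proof (cases "m \<le> a")
      case True
      have "(reduction_mat N L G *\<^sub>v window ?q N w t) $ i = state_output w (t + L) $ (a - m)"
        using i False True \<open>L < N\<close> G
        by (simp add: reduction_mat_mult_vec window_prefix predict a_def)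
      then show ?thesis using rhs_L True a D by (simp add: state_output_def outp_def u_def)
    next
      case False
      then show ?thesis
        using \<open>\<not> i < L * ?q\<close> i rhs_L a \<open>L < N\<close> G dims
        by (simp add: reduction_mat_mult_vec a_def u_def inp_def)
    qed
  qed
qed

lemma QDF_reduction_mat:
  assumes sf: "storage_function m p beh \<Phi> \<Psi>"
    and \<Psi>: "\<Psi> \<in> carrier_mat (N * (m + p)) (N * (m + p))" "transpose_mat \<Psi> = \<Psi>"
      "qdf_deg (m + p) \<Psi> \<le> int L"
    and \<Phi>: "\<Phi> \<in> carrier_mat (N\<Phi> * (m + p)) (N\<Phi> * (m + p))" "transpose_mat \<Phi> = \<Phi>"
      "qdf_deg (m + p) \<Phi> \<le> int L"
    and "L < N" and G: "G \<in> carrier_mat p (L * (m + p))"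
    and predict: "\<And>w t. w \<in> beh \<Longrightarrow> state_output w (t + L) = G *\<^sub>v window (m + p) L w t"
    and w: "w \<in> beh"
  shows "QDF (m + p) (transpose_mat (reduction_mat N L G) * \<Psi> * reduction_mat N L G) w t
    = QDF (m + p) \<Psi> w t"
proof -
  let ?q = "m + p" and ?S = "reduction_mat N L G"
  have q: "0 < ?q" using p by simp
  define \<iota> where "\<iota> = impulse (t + L) (inp m (w (t + L)))"
  have \<iota>: "\<iota> \<in> beh" unfolding \<iota>_def by (rule impulse_in_beh) simp
  have S: "?S \<in> carrier_mat (N * ?q) (N * ?q)" by (rule reduction_mat_carrier)
  then have "transpose_mat ?S * \<Psi> * ?S \<in> carrier_mat (N * ?q) (N * ?q)" using \<Psi>(1) by auto
  then have "QDF ?q (transpose_mat ?S * \<Psi> * ?S) w t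
      = window ?q N w t \<bullet> ((transpose_mat ?S * \<Psi> * ?S) *\<^sub>v window ?q N w t)"
    by (rule QDF_eq[OF q])
  also have "\<dots> = (?S *\<^sub>v window ?q N w t) \<bullet> (\<Psi> *\<^sub>v (?S *\<^sub>v window ?q N w t))"
    by (rule quadratic_form_congruence[OF S \<Psi>(1) carrier_window])
  also have "\<dots> = QDF ?q \<Psi> (\<lambda>s. w s + (-1) \<cdot>\<^sub>v \<iota> s) t"
    unfolding QDF_eq[OF q \<Psi>(1)]
    by (rule quadratic_form_cong_prefix[OF \<Psi>(1) _ _ qdf_deg_le_entries_zero[OF q \<Psi>]])
      (use S reduction_mat_mult_window[OF \<open>L < N\<close> G predict[OF w] w] in \<open>simp_all add: \<iota>_def\<close>)
  also have "\<dots> = QDF ?q \<Psi> w t"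
    using QDF_impulse_eq_0[OF sf \<Psi> \<Phi>, of "inp m (w (t + L))" t]
    by (intro QDF_add_null_trajectory[OF sf \<Psi>(1,2) w \<iota>]) (simp_all add: \<iota>_def)
  finally show ?thesis .
qed

lemma storage_function_degree_reduction:
  assumes \<Phi>: "is_coeff (m + p) \<Phi>" "qdf_deg (m + p) \<Phi> \<le> int L" and "lag_index \<le> L"
    and sf: "storage_function m p beh \<Phi> \<Psi>" and deg: "qdf_deg (m + p) \<Psi> \<le> int L"
  shows "\<exists>\<Psi>'. storage_function m p beh \<Phi> \<Psi>' \<and> qdf_deg (m + p) \<Psi>' \<le> int L - 1"
proof -
  have q: "0 < m + p" using p by simp
  obtain N where \<Psi>: "\<Psi> \<in> carrier_mat (N * (m + p)) (N * (m + p))" "transpose_mat \<Psi> = \<Psi>"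
    using sf unfolding storage_function_def is_coeff_def by blast
  obtain N\<Phi> where \<Phi>': "\<Phi> \<in> carrier_mat (N\<Phi> * (m + p)) (N\<Phi> * (m + p))" "transpose_mat \<Phi> = \<Phi>"
    using \<Phi>(1) unfolding is_coeff_def by blast
  show ?thesis
  proof (cases "N \<le> L")
    case True
    then show ?thesis using sf qdf_deg_le_wlen[of "m + p" \<Psi>] wlen_eq[OF q \<Psi>(1)] by force
  next
    case False
    obtain G where G: "G \<in> carrier_mat p (L * (m + p))"
      and predict: "\<And>w t. w \<in> beh \<Longrightarrow> state_output w (t + L) = G *\<^sub>v window (m + p) L w t"
      using state_output_predictor[OF \<open>lag_index \<le> L\<close>] by blast
    define S where "S = reduction_mat N L G"
    define \<Psi>' where "\<Psi>' = transpose_mat S * \<Psi> * S"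
    have S: "S \<in> carrier_mat (N * (m + p)) (N * (m + p))" by (simp add: S_def reduction_mat_carrier)
    have \<Psi>': "\<Psi>' \<in> carrier_mat (N * (m + p)) (N * (m + p))" using S \<Psi> by (simp add: \<Psi>'_def)
    have "transpose_mat \<Psi>' = \<Psi>'" unfolding \<Psi>'_def by (rule transpose_congruence[OF S \<Psi>])
    then have "is_coeff (m + p) \<Psi>'" using \<Psi>' unfolding is_coeff_def by blast
    moreover have same: "QDF (m + p) \<Psi>' w t = QDF (m + p) \<Psi> w t" if "w \<in> beh" for w t
      unfolding \<Psi>'_def S_def
      by (rule QDF_reduction_mat[OF sf \<Psi> deg \<Phi>' \<Phi>(2)]) (use False G predict that in auto)
    ultimately have "storage_function m p beh \<Phi> \<Psi>'"
      using sf unfolding storage_function_def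
      by (simp add: QDF_nabla[OF q \<Psi>'] QDF_nabla[OF q \<Psi>(1)] same)
    moreover have "qdf_deg (m + p) \<Psi>' \<le> int L - 1"
      using q \<Psi>' by (rule qdf_deg_le_of_rows_zero)
        (simp add: \<Psi>'_def S_def congruence_reduction_mat_row_zero[OF \<Psi>(1)])
    ultimately show ?thesis by blast
  qed
qed

lemma storage_function_deg_lt:
  assumes \<Phi>: "is_coeff (m + p) \<Phi>" and "dissipative m p beh \<Phi>"
  shows "\<exists>\<Psi>. storage_function m p beh \<Phi> \<Psi> \<and>
    qdf_deg (m + p) \<Psi> < max (qdf_deg (m + p) \<Phi>) (int lag_index)"
proof -
  define M where "M = nat (max (qdf_deg (m + p) \<Phi>) (int lag_index))"
  have M: "int M = max (qdf_deg (m + p) \<Phi>) (int lag_index)" by (simp add: M_def)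
  have descend: "\<exists>\<Psi>'. storage_function m p beh \<Phi> \<Psi>' \<and> qdf_deg (m + p) \<Psi>' \<le> int M - 1"
    if "storage_function m p beh \<Phi> \<Psi>" "qdf_deg (m + p) \<Psi> \<le> int (M + k)" for k \<Psi>
    using that
  proof (induction k arbitrary: \<Psi>)
    case 0
    then show ?case using storage_function_degree_reduction[OF \<Phi>, of M] M by simp
  next
    case (Suc k)
    then obtain \<Psi>' where "storage_function m p beh \<Phi> \<Psi>'" "qdf_deg (m + p) \<Psi>' \<le> int (M + k)"
      using storage_function_degree_reduction[OF \<Phi>, of "M + Suc k"] M by fastforce
    then show ?case by (rule Suc.IH)
  qed
  obtain \<Psi> where "storage_function m p beh \<Phi> \<Psi>"
    using \<open>dissipative m p beh \<Phi>\<close> unfolding dissipative_def by blast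
  moreover have "qdf_deg (m + p) \<Psi> \<le> int (M + nat (qdf_deg (m + p) \<Psi>))" by simp
  ultimately show ?thesis using descend M by fastforce
qed

end

theorem theorem1:
  fixes m p :: nat and Bh :: "(nat \<Rightarrow> real vec) set" and \<Phi> :: "real mat"
  assumes "m \<ge> 1" and "p \<ge> 1"
    and "Bh \<in> L_class m p"
    and "is_coeff (m + p) \<Phi>"
    and "dissipative m p Bh \<Phi>"
  shows "\<exists>\<Psi>. storage_function m p Bh \<Phi> \<Psi> \<and>
           qdf_deg (m + p) \<Psi> < max (qdf_deg (m + p) \<Phi>) (int (lag m p Bh))"
proof -
  define r where "r = (SOME r. is_repr m p Bh r)"
  have "is_repr m p Bh r"
    using assms(3) unfolding r_def L_class_def by (auto intro: someI)
  then obtain n A B C D where r: "r = (n, A, B, C, D)" and Bh: "Bh = behavior m p n A B C D"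
    and carrier: "A \<in> carrier_mat n n" "B \<in> carrier_mat n m" "C \<in> carrier_mat p n" "D \<in> carrier_mat p m"
    unfolding is_repr_def by (cases r) auto
  interpret state_space m p n A B C D
    using carrier assms(2) by unfold_locales auto
  have "lag m p Bh = lag_index" unfolding lag_def r_def[symmetric] r lag_index_def by simp
  then show ?thesis using storage_function_deg_lt[OF assms(4)] assms(5) Bh by simp
qed

end
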